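(* Let $B\in\mathbb{C}^{n\times n}$ be a Hermitian positive definite matrix with eigenvalues $\sigma_1\ge\sigma_2\ge\dots\ge\sigma_n>0$ and corresponding orthonormal eigenvectors $v_1,\dots,v_n$. Let $1\le k<l<n$, and set $V_k=[v_1,\dots,v_k]$, $V_{l\backslash k}=[v_{k+1},\dots,v_l]$, $V_l^{\perp}=[v_{l+1},\dots,v_n]$. Let $X\in\mathbb{C}^{n\times k}$ satisfy $X^*X=I_k$, and write \[ X=[V_k,V_{l\backslash k},V_l^{\perp}]\begin{bmatrix}X_k\\ X_{l\backslash k}\\ X_l^{\perp}\end{bmatrix},\qquad X_k\in\mathbb{C}^{k\times k},\ X_{l\backslash k}\in\mathbb{C}^{(l-k)\times k},\ X_l^{\perp}\in\mathbb{C}^{(n-l)\times k}, \] where $X_k$ is assumed nonsingular. Then, provided $\tan\angle(V_k,X)\neq 0$, \[ \frac{\tan\angle(V_k,BX)}{\tan\angle(V_k,X)}\le\frac{\sigma_{l+1}}{\sigma_k}+\frac{\sigma_{k+1}-\sigma_{l+1}}{\sigma_k}\cdot\frac{\bigl\lVert X_{l\backslash k}X_k^{-1}\bigr\rVert_2}{\left\lVert\begin{bmatrix}X_{l\backslash k}\\ X_l^{\perp}\end{bmatrix}X_k^{-1}\right\rVert_2}. \]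
   Context: For $n\times k$ matrices $V_k$ (with orthonormal columns) and $Z$ of full column rank, $\angle(V_k,Z)$ denotes the largest principal angle between $\operatorname{span}\{V_k\}$ and $\operatorname{span}\{Z\}$. In the setting of the claim, writing $Z$ in the eigenbasis as $Z=[V_k,V_{l\backslash k},V_l^{\perp}][Z_k;Z_{l\backslash k};Z_l^{\perp}]$ with $Z_k$ nonsingular, one has $\tan\angle(V_k,Z)=\bigl\lVert [Z_{l\backslash k};Z_l^{\perp}]Z_k^{-1}\bigr\rVert_2$. $\lVert\cdot\rVert_2$ is the spectral norm. *)

theory Defs
  imports "Jordan_Normal_Form.Schur_Decomposition"
begin

definition vnorm2 :: "complex vec \<Rightarrow> real" where
  "vnorm2 v = sqrt (\<Sum>i<dim_vec v. (cmod (v $ i))^2)"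

definition spec_norm :: "complex mat \<Rightarrow> real" where
  "spec_norm A = Sup {vnorm2 (A *\<^sub>v x) | x. x \<in> carrier_vec (dim_col A) \<and> vnorm2 x = 1}"

definition minv :: "complex mat \<Rightarrow> complex mat" where
  "minv A = (SOME C. C \<in> carrier_mat (dim_row A) (dim_row A) \<and>
                      A * C = 1\<^sub>m (dim_row A) \<and> C * A = 1\<^sub>m (dim_row A))"

definition blk :: "complex mat \<Rightarrow> nat \<Rightarrow> nat \<Rightarrow> nat \<Rightarrow> nat \<Rightarrow> complex mat" where
  "blk A r0 p c0 q = mat p q (\<lambda>(i,j). A $$ (i + r0, j + c0))"

definition hermitian_mat :: "complex mat \<Rightarrow> bool" where
  "hermitian_mat A \<longleftrightarrow> A \<in> carrier_mat (dim_row A) (dim_row A) \<and> mat_adjoint A = A"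

definition posdef_mat :: "complex mat \<Rightarrow> bool" where
  "posdef_mat A \<longleftrightarrow> (\<forall>x \<in> carrier_vec (dim_row A). x \<noteq> 0\<^sub>v (dim_row A) \<longrightarrow>
       Re (conjugate x \<bullet> (A *\<^sub>v x)) > 0)"

(* Cosine of the largest principal angle between span U (U with orthonormal
   columns) and span Z (same number of columns, full column rank):
   cos theta_max = min over unit w in span Z of the norm of the orthogonal
   projection of w onto span U, which equals norm (U^* w). *)
definition cos_max_angle :: "complex mat \<Rightarrow> complex mat \<Rightarrow> real" where
  "cos_max_angle U Z = Inf {vnorm2 (mat_adjoint U *\<^sub>v w) | w.
      (\<exists>c \<in> carrier_vec (dim_col Z). w = Z *\<^sub>v c) \<and> vnorm2 w = 1}"

definition max_angle :: "complex mat \<Rightarrow> complex mat \<Rightarrow> real" where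
  "max_angle U Z = arccos (cos_max_angle U Z)"

definition tan_angle :: "complex mat \<Rightarrow> complex mat \<Rightarrow> real" where
  "tan_angle U Z = tan (max_angle U Z)"

end

(*
  Write V^* Z = [Z_k; Z_r] in the eigenbasis and T = Z_r Z_k^-1. A vector Z c projects onto
  span V_k with norm |Z_k c|, and |Z c|^2 = |Z_k c|^2 + |T Z_k c|^2. With y = Z_k c, the cosine of
  the largest principal angle is the minimum of |y| subject to |y|^2 + |T y|^2 = 1, which is
  1 / sqrt (1 + |T|^2); hence tan angle (V_k, Z) = |T|.

  Since V^* B = Sigma V^*, passing from X to B X replaces T by Sigma_r T Sigma_k^-1, and
  |Sigma_k^-1| <= 1 / sigma_k. Splitting the rows of T at l - k into T_1 and T_2,
    |Sigma_r T z|^2 <= sigma_(k+1)^2 |T_1 z|^2 + sigma_(l+1)^2 |T_2 z|^2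
                    <= (sigma_(l+1) |T| + (sigma_(k+1) - sigma_(l+1)) |T_1|)^2 |z|^2,
  where the last step only uses |T_1 z| <= |T_1| |z|, |T z| <= |T| |z| and |T_1| <= |T|.
*)

theory Submission
  imports Defs
begin

section \<open>Euclidean norm of complex vectors\<close>

lemma vnorm2_nonneg [simp]: "0 \<le> vnorm2 v"
  unfolding vnorm2_def by (simp add: sum_nonneg)

lemma vnorm2_square: "(vnorm2 v)\<^sup>2 = (\<Sum>i<dim_vec v. (cmod (v $ i))\<^sup>2)"
  unfolding vnorm2_def by (simp add: sum_nonneg)

lemma cscalar_prod_self: "v \<bullet>c v = complex_of_real ((vnorm2 v)\<^sup>2)"
  unfolding vnorm2_square scalar_prod_def
  by (simp add: complex_norm_square[symmetric] atLeast0LessThan)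

lemma vnorm2_smult: "vnorm2 (a \<cdot>\<^sub>v v) = cmod a * vnorm2 v"
  unfolding vnorm2_def
  by (simp add: norm_mult power_mult_distrib sum_distrib_left[symmetric] real_sqrt_mult)

lemma vnorm2_unit_vec: "i < n \<Longrightarrow> vnorm2 (unit_vec n i) = 1"
  unfolding vnorm2_def unit_vec_def by (simp add: if_distrib[of "\<lambda>x. (cmod x)\<^sup>2"] cong: if_cong)

lemma vnorm2_square_split:
  assumes "v \<in> carrier_vec (p + q)"
  shows "(vnorm2 v)\<^sup>2 = (vnorm2 (vec_first v p))\<^sup>2 + (vnorm2 (vec_last v q))\<^sup>2"
proof -
  have "sum f {..<p + q} = sum f {..<p} + (\<Sum>i<q. f (p + i))" for f :: "nat \<Rightarrow> real"
    by (induct q) simp_all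
  then show ?thesis
    using assms unfolding vnorm2_square by (simp add: vec_first_def vec_last_def)
qed

lemma vnorm2_vec_first_le: "v \<in> carrier_vec (p + q) \<Longrightarrow> vnorm2 (vec_first v p) \<le> vnorm2 v"
  by (rule power2_le_imp_le) (simp_all add: vnorm2_square_split[of v p q])

lemma dim_mat_adjoint [simp]:
  "dim_row (mat_adjoint A) = dim_col A" "dim_col (mat_adjoint A) = dim_row A"
  unfolding mat_adjoint_def by auto

lemma index_mat_adjoint [simp]:
  "i < dim_col A \<Longrightarrow> j < dim_row A \<Longrightarrow> mat_adjoint A $$ (i, j) = cnj (A $$ (j, i))"
  unfolding mat_adjoint_def by (simp add: mat_of_rows_index)

lemma mat_adjoint_carrier: "A \<in> carrier_mat m n \<Longrightarrow> mat_adjoint A \<in> carrier_mat n m"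
  by auto

lemma cscalar_prod_mult_mat_vec:
  assumes A: "(A :: complex mat) \<in> carrier_mat m n" and u: "u \<in> carrier_vec n" and w: "w \<in> carrier_vec m"
  shows "(A *\<^sub>v u) \<bullet>c w = u \<bullet>c (mat_adjoint A *\<^sub>v w)"
proof -
  have "(A *\<^sub>v u) \<bullet>c w = (\<Sum>i<m. (\<Sum>j<n. A $$ (i, j) * u $ j) * cnj (w $ i))"
    using A u w by (simp add: scalar_prod_def atLeast0LessThan row_def)
  also have "\<dots> = (\<Sum>j<n. \<Sum>i<m. A $$ (i, j) * u $ j * cnj (w $ i))"
    by (simp add: sum_distrib_right sum.swap[of _ "{..<n}"])
  also have "\<dots> = (\<Sum>j<n. u $ j * cnj (\<Sum>i<m. cnj (A $$ (i, j)) * w $ i))"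
    by (simp add: sum_distrib_left mult_ac)
  also have "\<dots> = u \<bullet>c (mat_adjoint A *\<^sub>v w)"
    using A u w by (simp add: scalar_prod_def atLeast0LessThan row_def)
  finally show ?thesis .
qed

lemma vnorm2_isometry:
  assumes A: "A \<in> carrier_mat m n" and unitary: "mat_adjoint A * A = 1\<^sub>m n" and u: "u \<in> carrier_vec n"
  shows "vnorm2 (A *\<^sub>v u) = vnorm2 u"
proof -
  have "complex_of_real ((vnorm2 (A *\<^sub>v u))\<^sup>2) = (A *\<^sub>v u) \<bullet>c (A *\<^sub>v u)"
    by (rule cscalar_prod_self[symmetric])
  also have "\<dots> = u \<bullet>c (mat_adjoint A *\<^sub>v (A *\<^sub>v u))"
    using A u by (intro cscalar_prod_mult_mat_vec) auto
  also have "mat_adjoint A *\<^sub>v (A *\<^sub>v u) = u"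
    using A u unitary by (metis assoc_mult_mat_vec mat_adjoint_carrier one_mult_mat_vec)
  finally have "complex_of_real ((vnorm2 (A *\<^sub>v u))\<^sup>2) = complex_of_real ((vnorm2 u)\<^sup>2)"
    by (simp only: cscalar_prod_self)
  then show ?thesis by (simp only: of_real_eq_iff power2_eq_iff_nonneg vnorm2_nonneg)
qed

lemma mat_diag_mult_vec: "v \<in> carrier_vec n \<Longrightarrow> mat_diag n f *\<^sub>v v = vec n (\<lambda>i. f i * v $ i)"
  by (auto simp: mat_diag_def scalar_prod_def row_def if_distrib[of "\<lambda>x. x * _"] sum.delta
      cong: if_cong)

lemma vnorm2_mat_diag_mult_square_le:
  assumes v: "v \<in> carrier_vec n" and f: "\<And>i. i < n \<Longrightarrow> cmod (f i) \<le> c"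
  shows "(vnorm2 (mat_diag n f *\<^sub>v v))\<^sup>2 \<le> c\<^sup>2 * (vnorm2 v)\<^sup>2"
proof -
  have "(cmod (f i))\<^sup>2 \<le> c\<^sup>2" if "i < n" for i
    using f[OF that] by (intro power_mono) auto
  then show ?thesis
    using v unfolding vnorm2_square
    by (auto simp: mat_diag_mult_vec norm_mult power_mult_distrib sum_distrib_left
        intro!: sum_mono mult_right_mono)
qed

section \<open>Spectral norm\<close>

lemma spec_norm_bdd_above:
  assumes T: "T \<in> carrier_mat m k"
  shows "bdd_above {vnorm2 (T *\<^sub>v x) | x. x \<in> carrier_vec (dim_col T) \<and> vnorm2 x = 1}"
proof -
  define r where "r i = (\<Sum>j<k. cmod (T $$ (i, j)))" for i
  have "vnorm2 (T *\<^sub>v x) \<le> sqrt (\<Sum>i<m. (r i)\<^sup>2)" if x: "x \<in> carrier_vec k" "vnorm2 x = 1" for x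
  proof -
    have "cmod (x $ j) \<le> 1" if j: "j < k" for j
    proof -
      have "(cmod (x $ j))\<^sup>2 \<le> (vnorm2 x)\<^sup>2"
        unfolding vnorm2_square using x j by (intro member_le_sum) auto
      then show ?thesis using x by (simp add: abs_square_le_1)
    qed
    then have "cmod ((T *\<^sub>v x) $ i) \<le> r i" if i: "i < m" for i
      using T x i unfolding r_def
      by (auto simp: scalar_prod_def atLeast0LessThan row_def norm_mult
          intro!: order.trans[OF norm_sum] sum_mono mult_left_le)
    then have "(vnorm2 (T *\<^sub>v x))\<^sup>2 \<le> (\<Sum>i<m. (r i)\<^sup>2)"
      unfolding vnorm2_square using T by (auto intro!: sum_mono power_mono)
    then show ?thesis by (simp add: real_le_rsqrt)
  qed
  then show ?thesis using T unfolding bdd_above_def by auto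
qed

lemma spec_norm_upper:
  "T \<in> carrier_mat m k \<Longrightarrow> x \<in> carrier_vec k \<Longrightarrow> vnorm2 x = 1
    \<Longrightarrow> vnorm2 (T *\<^sub>v x) \<le> spec_norm T"
  unfolding spec_norm_def by (rule cSup_upper[OF _ spec_norm_bdd_above]) auto

lemma spec_norm_leI:
  assumes T: "T \<in> carrier_mat m k" and k: "0 < k"
    and bound: "\<And>x. x \<in> carrier_vec k \<Longrightarrow> vnorm2 x = 1 \<Longrightarrow> vnorm2 (T *\<^sub>v x) \<le> M"
  shows "spec_norm T \<le> M"
  unfolding spec_norm_def
proof (rule cSup_least)
  show "{vnorm2 (T *\<^sub>v x) |x. x \<in> carrier_vec (dim_col T) \<and> vnorm2 x = 1} \<noteq> {}"
    using T k vnorm2_unit_vec[of 0 k] by (auto intro!: exI[of _ "unit_vec k 0"])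
qed (use T bound in auto)

lemma spec_norm_nonneg: "T \<in> carrier_mat m k \<Longrightarrow> 0 < k \<Longrightarrow> 0 \<le> spec_norm T"
  using spec_norm_upper[of T m k "unit_vec k 0"] vnorm2_unit_vec[of 0 k]
  by (auto intro: order.trans[OF vnorm2_nonneg])

lemma vnorm2_mult_mat_vec_le:
  assumes T: "T \<in> carrier_mat m k" and x: "x \<in> carrier_vec k"
  shows "vnorm2 (T *\<^sub>v x) \<le> spec_norm T * vnorm2 x"
proof (cases "vnorm2 x = 0")
  case True
  then have "x = 0\<^sub>v k"
    using x unfolding vnorm2_def by (auto simp: sum_nonneg_eq_0_iff sum_nonneg)
  then show ?thesis using T by (simp add: vnorm2_def)
next
  case False
  define a where "a = complex_of_real (1 / vnorm2 x)"
  have "vnorm2 (a \<cdot>\<^sub>v x) = 1"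
    using False by (simp add: a_def vnorm2_smult norm_divide)
  then have "vnorm2 (T *\<^sub>v (a \<cdot>\<^sub>v x)) \<le> spec_norm T"
    using T x by (intro spec_norm_upper) auto
  moreover have "T *\<^sub>v (a \<cdot>\<^sub>v x) = a \<cdot>\<^sub>v (T *\<^sub>v x)"
    using T x by (rule mult_mat_vec)
  moreover have "0 < vnorm2 x" using False vnorm2_nonneg[of x] by linarith
  ultimately show ?thesis
    by (simp add: a_def vnorm2_smult norm_divide pos_divide_le_eq)
qed

lemma spec_norm_mult_le:
  assumes A: "A \<in> carrier_mat m p" and B: "B \<in> carrier_mat p k" and p: "0 < p" and k: "0 < k"
  shows "spec_norm (A * B) \<le> spec_norm A * spec_norm B"
proof (rule spec_norm_leI[OF mult_carrier_mat[OF A B] k])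
  fix x :: "complex vec" assume x: "x \<in> carrier_vec k" "vnorm2 x = 1"
  have "vnorm2 ((A * B) *\<^sub>v x) = vnorm2 (A *\<^sub>v (B *\<^sub>v x))"
    using A B x by (simp add: assoc_mult_mat_vec)
  also have "\<dots> \<le> spec_norm A * vnorm2 (B *\<^sub>v x)"
    using A B x by (intro vnorm2_mult_mat_vec_le) auto
  also have "\<dots> \<le> spec_norm A * spec_norm B"
    using A B x p by (intro mult_left_mono spec_norm_upper spec_norm_nonneg) auto
  finally show "vnorm2 ((A * B) *\<^sub>v x) \<le> spec_norm A * spec_norm B" .
qed

lemma spec_norm_mat_diag_le:
  assumes n: "0 < n" and f: "\<And>i. i < n \<Longrightarrow> cmod (f i) \<le> c"
  shows "spec_norm (mat_diag n f) \<le> c"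
proof (rule spec_norm_leI[OF mat_diag_dim n])
  fix x :: "complex vec" assume x: "x \<in> carrier_vec n" "vnorm2 x = 1"
  have "0 \<le> c" using f[OF n] norm_ge_zero order.trans by blast
  moreover have "(vnorm2 (mat_diag n f *\<^sub>v x))\<^sup>2 \<le> c\<^sup>2"
    using vnorm2_mat_diag_mult_square_le[OF x(1) f] x(2) by simp
  ultimately show "vnorm2 (mat_diag n f *\<^sub>v x) \<le> c"
    by (rule power2_le_imp_le[rotated])
qed

section \<open>Submatrices, inverses and eigenbases\<close>

lemma dim_blk [simp]: "dim_row (blk A r p c q) = p" "dim_col (blk A r p c q) = q"
  unfolding blk_def by auto

lemma blk_carrier [simp]: "blk A r p c q \<in> carrier_mat p q"
  by (simp add: carrier_matI)

lemma index_blk [simp]: "i < p \<Longrightarrow> j < q \<Longrightarrow> blk A r p c q $$ (i, j) = A $$ (i + r, j + c)"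
  unfolding blk_def by auto

lemma blk_blk:
  "r' + p' \<le> p \<Longrightarrow> c' + q' \<le> q
    \<Longrightarrow> blk (blk A r p c q) r' p' c' q' = blk A (r + r') p' (c + c') q'"
  by (rule eq_matI) (auto simp: add_ac)

lemma blk_mult:
  assumes "A \<in> carrier_mat m p" "B \<in> carrier_mat p k" "r + q \<le> m"
  shows "blk (A * B) r q 0 k = blk A r q 0 p * B"
  by (rule eq_matI) (use assms in \<open>auto simp: scalar_prod_def row_def\<close>)

lemma blk_mult_vec_first:
  assumes "A \<in> carrier_mat m n" "x \<in> carrier_vec n" "p \<le> m"
  shows "blk A 0 p 0 n *\<^sub>v x = vec_first (A *\<^sub>v x) p"
  by (rule eq_vecI) (use assms in \<open>auto simp: vec_first_def scalar_prod_def row_def\<close>)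

lemma blk_mult_vec_last:
  assumes "A \<in> carrier_mat m n" "x \<in> carrier_vec n" "r + q = m"
  shows "blk A r q 0 n *\<^sub>v x = vec_last (A *\<^sub>v x) q"
  by (rule eq_vecI) (use assms in \<open>auto simp: vec_last_def scalar_prod_def row_def add.commute\<close>)

lemma mat_adjoint_blk_cols:
  assumes "A \<in> carrier_mat m n" "c + q \<le> n"
  shows "mat_adjoint (blk A 0 m c q) = blk (mat_adjoint A) c q 0 m"
  by (rule eq_matI) (use assms in auto)

lemma blk_mat_diag_mult:
  assumes "Y \<in> carrier_mat m k" "r + q \<le> m"
  shows "blk (mat_diag m f * Y) r q 0 k = mat_diag q (\<lambda>i. f (r + i)) * blk Y r q 0 k"
  using assms by (auto simp: mat_diag_mult_left[OF assms(1)] mat_diag_mult_left[OF blk_carrier]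
      add.commute intro!: eq_matI)

lemma minv_unique:
  assumes A: "A \<in> carrier_mat k k" and C: "C \<in> carrier_mat k k"
    and AC: "A * C = 1\<^sub>m k" and CA: "C * A = 1\<^sub>m k"
  shows "invertible_mat A" "minv A = C"
proof -
  show "invertible_mat A"
    using A C AC CA unfolding invertible_mat_def inverts_mat_def square_mat.simps by auto
  have "\<exists>C. C \<in> carrier_mat (dim_row A) (dim_row A)
      \<and> A * C = 1\<^sub>m (dim_row A) \<and> C * A = 1\<^sub>m (dim_row A)"
    using A C AC CA by auto
  then have "minv A \<in> carrier_mat (dim_row A) (dim_row A) \<and> minv A * A = 1\<^sub>m (dim_row A)"
    unfolding minv_def by (rule someI2_ex) blast
  then have M: "minv A \<in> carrier_mat k k" "minv A * A = 1\<^sub>m k"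
    using A by auto
  have "minv A = minv A * (A * C)" unfolding AC using M by simp
  also have "\<dots> = (minv A * A) * C" using assoc_mult_mat[OF M(1) A C] by simp
  also have "\<dots> = C" using M C by simp
  finally show "minv A = C" .
qed

lemma minv_inverse:
  assumes inv: "invertible_mat A" and A: "A \<in> carrier_mat k k"
  shows "minv A \<in> carrier_mat k k" "A * minv A = 1\<^sub>m k" "minv A * A = 1\<^sub>m k"
proof -
  obtain C where AC: "A * C = 1\<^sub>m k" and CA: "C * A = 1\<^sub>m (dim_row C)"
    using inv A unfolding invertible_mat_def inverts_mat_def by auto
  have C: "C \<in> carrier_mat k k"
    using A AC CA by (metis carrier_matD carrier_matI index_mult_mat(2,3) index_one_mat(2,3))
  have "minv A = C" using minv_unique[OF A C AC] CA C by auto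
  then show "minv A \<in> carrier_mat k k" "A * minv A = 1\<^sub>m k" "minv A * A = 1\<^sub>m k"
    using C AC CA by auto
qed

lemma minv_mat_diag_mult:
  assumes inv: "invertible_mat A" and A: "A \<in> carrier_mat k k" and d: "\<And>j. j < k \<Longrightarrow> d j \<noteq> 0"
  shows "invertible_mat (mat_diag k d * A)" "minv (mat_diag k d * A) = minv A * mat_diag k (\<lambda>j. 1 / d j)"
proof -
  let ?D = "mat_diag k d" and ?D' = "mat_diag k (\<lambda>j. 1 / d j)"
  note A_inv = minv_inverse[OF inv A]
  have DD': "?D * ?D' = 1\<^sub>m k" "?D' * ?D = 1\<^sub>m k"
    unfolding mat_diag_diag by (auto simp: mat_diag_def d intro!: eq_matI)
  have "?D * A * (minv A * ?D') = ?D * (A * minv A) * ?D'"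
    using A A_inv(1) by (simp add: assoc_mult_mat[of _ k k _ k _ k])
  then have right: "?D * A * (minv A * ?D') = 1\<^sub>m k"
    using A_inv DD' by (simp add: right_mult_one_mat[OF mat_diag_dim])
  have "minv A * ?D' * (?D * A) = minv A * (?D' * (?D * A))"
    by (rule assoc_mult_mat[OF A_inv(1) mat_diag_dim mult_carrier_mat[OF mat_diag_dim A]])
  also have "?D' * (?D * A) = ?D' * ?D * A"
    by (rule assoc_mult_mat[OF mat_diag_dim mat_diag_dim A, symmetric])
  finally have left: "minv A * ?D' * (?D * A) = 1\<^sub>m k"
    using A_inv DD' A by simp
  show "invertible_mat (?D * A)" "minv (?D * A) = minv A * ?D'"
    using minv_unique[OF mult_carrier_mat[OF mat_diag_dim A] mult_carrier_mat[OF A_inv(1) mat_diag_dim]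
        right left] by simp_all
qed

lemma mat_adjoint_mult_eigenbasis:
  assumes B: "B \<in> carrier_mat n n" and V: "V \<in> carrier_mat n n" and unitary: "mat_adjoint V * V = 1\<^sub>m n"
    and eig: "\<And>i. i < n \<Longrightarrow> B *\<^sub>v col V i = d i \<cdot>\<^sub>v col V i"
  shows "mat_adjoint V * B = mat_diag n d * mat_adjoint V"
proof -
  have BV: "B * V = V * mat_diag n d"
  proof (rule eq_matI)
    fix i j assume "i < dim_row (V * mat_diag n d)" "j < dim_col (V * mat_diag n d)"
    then have ij: "i < n" "j < n" using V by (auto simp: mat_diag_def)
    have "(B * V) $$ (i, j) = (B *\<^sub>v col V j) $ i" using B V ij by simp
    also have "\<dots> = d j * V $$ (i, j)" using eig[OF ij(2)] V ij by simp
    also have "\<dots> = (V * mat_diag n d) $$ (i, j)" using V ij by (simp add: mat_diag_mult_right)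
    finally show "(B * V) $$ (i, j) = (V * mat_diag n d) $$ (i, j)" .
  qed (use B V in \<open>auto simp: mat_diag_def\<close>)
  have V': "mat_adjoint V \<in> carrier_mat n n" using V by (rule mat_adjoint_carrier)
  have "V * mat_adjoint V = 1\<^sub>m n"
    using mat_mult_left_right_inverse[OF V' V unitary] .
  then have "mat_adjoint V * B = (mat_adjoint V * B) * (V * mat_adjoint V)"
    using B V' by simp
  also have "\<dots> = mat_adjoint V * (B * V) * mat_adjoint V"
    using B V V' by (simp add: assoc_mult_mat[of _ n n _ n _ n])
  also have "\<dots> = (mat_adjoint V * V) * mat_diag n d * mat_adjoint V"
    unfolding BV using V V' by (simp add: assoc_mult_mat[of _ n n _ n _ n])
  finally show ?thesis using unitary by (simp add: left_mult_one_mat[OF mat_diag_dim])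
qed

section \<open>Diagonal scaling of the spectral norm\<close>

lemma weighted_squares_le_square:
  fixes s t a b A N :: real
  assumes "0 \<le> s" "s \<le> t" "0 \<le> a" "a \<le> A" "A \<le> N" "a\<^sup>2 + b\<^sup>2 \<le> N\<^sup>2"
  shows "t\<^sup>2 * a\<^sup>2 + s\<^sup>2 * b\<^sup>2 \<le> (s * N + (t - s) * A)\<^sup>2"
proof -
  have "t\<^sup>2 * a\<^sup>2 + s\<^sup>2 * b\<^sup>2 = s\<^sup>2 * (a\<^sup>2 + b\<^sup>2) + (t\<^sup>2 - s\<^sup>2) * a\<^sup>2"
    by (simp add: algebra_simps)
  also have "\<dots> \<le> s\<^sup>2 * N\<^sup>2 + (t\<^sup>2 - s\<^sup>2) * A\<^sup>2"
    using assms by (intro add_mono mult_left_mono power_mono) auto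
  also have "\<dots> = (s * N + (t - s) * A)\<^sup>2 - 2 * s * (t - s) * A * (N - A)"
    by (simp add: algebra_simps power2_eq_square)
  also have "\<dots> \<le> (s * N + (t - s) * A)\<^sup>2"
    using assms by simp
  finally show ?thesis .
qed

lemma vnorm2_mat_diag_mult_split_le:
  assumes v: "v \<in> carrier_vec (p + q)"
    and top: "\<And>i. i < p \<Longrightarrow> cmod (d i) \<le> t"
    and bot: "\<And>i. p \<le> i \<Longrightarrow> i < p + q \<Longrightarrow> cmod (d i) \<le> s"
  shows "(vnorm2 (mat_diag (p + q) d *\<^sub>v v))\<^sup>2
    \<le> t\<^sup>2 * (vnorm2 (vec_first v p))\<^sup>2 + s\<^sup>2 * (vnorm2 (vec_last v q))\<^sup>2"
proof -
  let ?w = "mat_diag (p + q) d *\<^sub>v v"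
  have "vec_first ?w p = mat_diag p d *\<^sub>v vec_first v p"
    by (rule eq_vecI) (use v in \<open>auto simp: mat_diag_mult_vec vec_first_def\<close>)
  then have first: "(vnorm2 (vec_first ?w p))\<^sup>2 \<le> t\<^sup>2 * (vnorm2 (vec_first v p))\<^sup>2"
    using top by (simp add: vnorm2_mat_diag_mult_square_le)
  have "vec_last ?w q = mat_diag q (\<lambda>i. d (p + i)) *\<^sub>v vec_last v q"
    by (rule eq_vecI) (use v in \<open>auto simp: mat_diag_mult_vec vec_last_def\<close>)
  then have last: "(vnorm2 (vec_last ?w q))\<^sup>2 \<le> s\<^sup>2 * (vnorm2 (vec_last v q))\<^sup>2"
    using bot by (simp add: vnorm2_mat_diag_mult_square_le)
  have "?w \<in> carrier_vec (p + q)" using mult_mat_vec_carrier[OF mat_diag_dim v] .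
  then show ?thesis
    using vnorm2_square_split first last by simp
qed

lemma spec_norm_blk_top_le:
  assumes T: "T \<in> carrier_mat m k" and k: "0 < k" and r: "r \<le> m"
  shows "spec_norm (blk T 0 r 0 k) \<le> spec_norm T"
proof (rule spec_norm_leI[OF blk_carrier k])
  fix x :: "complex vec" assume x: "x \<in> carrier_vec k" "vnorm2 x = 1"
  have "vnorm2 (blk T 0 r 0 k *\<^sub>v x) = vnorm2 (vec_first (T *\<^sub>v x) r)"
    using T x r by (simp add: blk_mult_vec_first)
  also have "\<dots> \<le> vnorm2 (T *\<^sub>v x)"
    using mult_mat_vec_carrier[OF T x(1)] r by (intro vnorm2_vec_first_le[of _ r "m - r"]) auto
  also have "\<dots> \<le> spec_norm T"
    using T x by (rule spec_norm_upper)
  finally show "vnorm2 (blk T 0 r 0 k *\<^sub>v x) \<le> spec_norm T" .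
qed

lemma spec_norm_mat_diag_mult_le:
  assumes T: "T \<in> carrier_mat m k" and k: "0 < k" and r: "r \<le> m" and st: "0 \<le> s" "s \<le> t"
    and top: "\<And>i. i < r \<Longrightarrow> cmod (d i) \<le> t"
    and bot: "\<And>i. r \<le> i \<Longrightarrow> i < m \<Longrightarrow> cmod (d i) \<le> s"
  shows "spec_norm (mat_diag m d * T) \<le> s * spec_norm T + (t - s) * spec_norm (blk T 0 r 0 k)"
proof (rule spec_norm_leI[OF mult_carrier_mat[OF mat_diag_dim T] k])
  fix x :: "complex vec" assume x: "x \<in> carrier_vec k" "vnorm2 x = 1"
  define v where "v = T *\<^sub>v x"
  have m: "r + (m - r) = m" using r by simp
  have v: "v \<in> carrier_vec m" using mult_mat_vec_carrier[OF T x(1)] unfolding v_def .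
  have "vnorm2 (blk T 0 r 0 k *\<^sub>v x) \<le> spec_norm (blk T 0 r 0 k)"
    by (rule spec_norm_upper[OF blk_carrier x])
  then have top_part: "vnorm2 (vec_first v r) \<le> spec_norm (blk T 0 r 0 k)"
    using T x r by (simp add: v_def blk_mult_vec_first)
  have "(vnorm2 (vec_first v r))\<^sup>2 + (vnorm2 (vec_last v (m - r)))\<^sup>2 = (vnorm2 v)\<^sup>2"
    using vnorm2_square_split[of v r "m - r", unfolded m, OF v] by simp
  also have "\<dots> \<le> (spec_norm T)\<^sup>2"
    using spec_norm_upper[OF T x] unfolding v_def by (intro power_mono) auto
  finally have whole: "(vnorm2 (vec_first v r))\<^sup>2 + (vnorm2 (vec_last v (m - r)))\<^sup>2 \<le> (spec_norm T)\<^sup>2" .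
  have "(vnorm2 (mat_diag m d *\<^sub>v v))\<^sup>2
      \<le> t\<^sup>2 * (vnorm2 (vec_first v r))\<^sup>2 + s\<^sup>2 * (vnorm2 (vec_last v (m - r)))\<^sup>2"
    using vnorm2_mat_diag_mult_split_le[of v r "m - r" d t s, unfolded m] v top bot by blast
  also have "\<dots> \<le> (s * spec_norm T + (t - s) * spec_norm (blk T 0 r 0 k))\<^sup>2"
    by (rule weighted_squares_le_square[OF st vnorm2_nonneg top_part spec_norm_blk_top_le[OF T k r] whole])
  finally have square: "(vnorm2 (mat_diag m d *\<^sub>v v))\<^sup>2
      \<le> (s * spec_norm T + (t - s) * spec_norm (blk T 0 r 0 k))\<^sup>2" .
  have nonneg: "0 \<le> s * spec_norm T + (t - s) * spec_norm (blk T 0 r 0 k)"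
    using st spec_norm_nonneg[OF T k] spec_norm_nonneg[OF blk_carrier k] by simp
  have "(mat_diag m d * T) *\<^sub>v x = mat_diag m d *\<^sub>v v"
    unfolding v_def by (rule assoc_mult_mat_vec[OF mat_diag_dim T x(1)])
  then show "vnorm2 ((mat_diag m d * T) *\<^sub>v x) \<le> s * spec_norm T + (t - s) * spec_norm (blk T 0 r 0 k)"
    using power2_le_imp_le[OF square nonneg] by simp
qed

lemma spec_norm_diag_sandwich_le:
  assumes T: "T \<in> carrier_mat m k" and k: "0 < k" and r: "r \<le> m" and st: "0 \<le> s" "s \<le> t"
    and top: "\<And>i. i < r \<Longrightarrow> cmod (d i) \<le> t"
    and bot: "\<And>i. r \<le> i \<Longrightarrow> i < m \<Longrightarrow> cmod (d i) \<le> s"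
    and g: "0 < g" and e: "\<And>j. j < k \<Longrightarrow> g \<le> cmod (e j)"
  shows "spec_norm (mat_diag m d * T * mat_diag k (\<lambda>j. 1 / e j))
    \<le> (s * spec_norm T + (t - s) * spec_norm (blk T 0 r 0 k)) / g"
proof -
  have DT: "mat_diag m d * T \<in> carrier_mat m k" using mult_carrier_mat[OF mat_diag_dim T] .
  have "cmod (1 / e j) \<le> 1 / g" if "j < k" for j
    using e[OF that] g by (simp add: norm_divide frac_le)
  then have "spec_norm (mat_diag k (\<lambda>j. 1 / e j)) \<le> 1 / g"
    using k by (rule spec_norm_mat_diag_le[rotated])
  then have diag_bound: "spec_norm (mat_diag m d * T) * spec_norm (mat_diag k (\<lambda>j. 1 / e j))
      \<le> (s * spec_norm T + (t - s) * spec_norm (blk T 0 r 0 k)) * (1 / g)"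
    using spec_norm_mat_diag_mult_le[OF T k r st top bot] spec_norm_nonneg[OF DT k]
      spec_norm_nonneg[OF mat_diag_dim k]
    by (intro mult_mono') auto
  have "spec_norm (mat_diag m d * T * mat_diag k (\<lambda>j. 1 / e j))
      \<le> spec_norm (mat_diag m d * T) * spec_norm (mat_diag k (\<lambda>j. 1 / e j))"
    by (rule spec_norm_mult_le[OF DT mat_diag_dim k k])
  also note diag_bound
  finally show ?thesis by simp
qed

section \<open>Tangent of the largest principal angle\<close>

lemma arccos_inverse_sqrt: "0 \<le> x \<Longrightarrow> arccos (1 / sqrt (1 + x\<^sup>2)) = arctan x"
  unfolding cos_arctan[symmetric] using arctan_ubound[of x] zero_le_arctan_iff[of x]
  by (intro arccos_cos) linarith+

lemma le_inverse_sqrt_iff: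
  fixes c x :: real
  assumes c: "0 < c" and x: "0 \<le> x"
  shows "c \<le> 1 / sqrt (1 + x\<^sup>2) \<longleftrightarrow> x \<le> sqrt (1 / c\<^sup>2 - 1)"
proof -
  have "c \<le> 1 / sqrt (1 + x\<^sup>2) \<longleftrightarrow> sqrt (c\<^sup>2) \<le> sqrt (1 / (1 + x\<^sup>2))"
    using c by (simp add: real_sqrt_divide)
  also have "\<dots> \<longleftrightarrow> c\<^sup>2 \<le> 1 / (1 + x\<^sup>2)"
    by (rule real_sqrt_le_iff)
  also have "\<dots> \<longleftrightarrow> x\<^sup>2 \<le> 1 / c\<^sup>2 - 1"
    using c by (simp add: add_pos_nonneg field_simps)
  also have "\<dots> \<longleftrightarrow> sqrt (x\<^sup>2) \<le> sqrt (1 / c\<^sup>2 - 1)"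
    by (rule real_sqrt_le_iff[symmetric])
  finally show ?thesis
    using x by simp
qed

definition graph_sphere :: "complex mat \<Rightarrow> complex vec set" where
  "graph_sphere T = {y \<in> carrier_vec (dim_col T). (vnorm2 y)\<^sup>2 + (vnorm2 (T *\<^sub>v y))\<^sup>2 = 1}"

lemma graph_sphere_lower:
  assumes T: "T \<in> carrier_mat m k" and y: "y \<in> graph_sphere T"
  shows "1 / sqrt (1 + (spec_norm T)\<^sup>2) \<le> vnorm2 y"
proof -
  have yk: "y \<in> carrier_vec k" and sphere: "(vnorm2 y)\<^sup>2 + (vnorm2 (T *\<^sub>v y))\<^sup>2 = 1"
    using T y unfolding graph_sphere_def by auto
  have "(vnorm2 (T *\<^sub>v y))\<^sup>2 \<le> (spec_norm T * vnorm2 y)\<^sup>2"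
    using vnorm2_mult_mat_vec_le[OF T yk] by (intro power_mono) auto
  then have "1 / (1 + (spec_norm T)\<^sup>2) \<le> (vnorm2 y)\<^sup>2"
    using sphere by (simp add: divide_le_eq add_pos_nonneg algebra_simps power_mult_distrib)
  then have "sqrt (1 / (1 + (spec_norm T)\<^sup>2)) \<le> sqrt ((vnorm2 y)\<^sup>2)"
    by (rule real_sqrt_le_mono)
  then show ?thesis
    by (simp add: real_sqrt_divide)
qed

lemma graph_sphere_normalize:
  assumes T: "T \<in> carrier_mat m k" and x: "x \<in> carrier_vec k"
  defines "a \<equiv> 1 / sqrt (1 + (vnorm2 (T *\<^sub>v x))\<^sup>2)"
  assumes unit: "vnorm2 x = 1"
  shows "complex_of_real a \<cdot>\<^sub>v x \<in> graph_sphere T" and "vnorm2 (complex_of_real a \<cdot>\<^sub>v x) = a"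
proof -
  have pos: "0 < 1 + (vnorm2 (T *\<^sub>v x))\<^sup>2"
    by (simp add: add_pos_nonneg)
  then show a: "vnorm2 (complex_of_real a \<cdot>\<^sub>v x) = a"
    using unit unfolding a_def by (simp add: vnorm2_smult norm_divide)
  have "a\<^sup>2 + (a * vnorm2 (T *\<^sub>v x))\<^sup>2 = a\<^sup>2 * (1 + (vnorm2 (T *\<^sub>v x))\<^sup>2)"
    by (simp add: algebra_simps power_mult_distrib)
  also have "\<dots> = 1"
    using pos unfolding a_def by (simp add: power_divide)
  finally have "a\<^sup>2 + (a * vnorm2 (T *\<^sub>v x))\<^sup>2 = 1" .
  moreover have "T *\<^sub>v (complex_of_real a \<cdot>\<^sub>v x) = complex_of_real a \<cdot>\<^sub>v (T *\<^sub>v x)"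
    using T x by (rule mult_mat_vec)
  ultimately show "complex_of_real a \<cdot>\<^sub>v x \<in> graph_sphere T"
    using T x a pos unfolding graph_sphere_def a_def by (simp add: vnorm2_smult norm_divide)
qed

lemma Inf_vnorm2_graph_sphere:
  assumes T: "T \<in> carrier_mat m k" and k: "0 < k"
  shows "Inf (vnorm2 ` graph_sphere T) = 1 / sqrt (1 + (spec_norm T)\<^sup>2)"
proof -
  let ?c = "Inf (vnorm2 ` graph_sphere T)"
  have member: "1 / sqrt (1 + (vnorm2 (T *\<^sub>v x))\<^sup>2) \<in> vnorm2 ` graph_sphere T"
    if "x \<in> carrier_vec k" "vnorm2 x = 1" for x
    using graph_sphere_normalize[OF T that] by (metis image_eqI)
  have bdd: "bdd_below (vnorm2 ` graph_sphere T)"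
    using graph_sphere_lower[OF T] by (rule bdd_belowI2)
  have "graph_sphere T \<noteq> {}"
    using member[of "unit_vec k 0"] vnorm2_unit_vec[OF k] by auto
  then have lower: "1 / sqrt (1 + (spec_norm T)\<^sup>2) \<le> ?c"
    using graph_sphere_lower[OF T] by (rule cINF_greatest)
  then have c: "0 < ?c"
    by (rule less_le_trans[rotated]) (simp add: add_pos_nonneg)
  have "vnorm2 (T *\<^sub>v x) \<le> sqrt (1 / ?c\<^sup>2 - 1)" if "x \<in> carrier_vec k" "vnorm2 x = 1" for x
    using cInf_lower[OF member[OF that] bdd] le_inverse_sqrt_iff[OF c vnorm2_nonneg] by blast
  then have "spec_norm T \<le> sqrt (1 / ?c\<^sup>2 - 1)"
    by (rule spec_norm_leI[OF T k])
  then have "?c \<le> 1 / sqrt (1 + (spec_norm T)\<^sup>2)"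
    using le_inverse_sqrt_iff[OF c spec_norm_nonneg[OF T k]] by blast
  with lower show ?thesis by linarith
qed

lemma mat_adjoint_first_cols_mult_vec:
  assumes V: "V \<in> carrier_mat n n" and Z: "Z \<in> carrier_mat n p" and c: "c \<in> carrier_vec p"
    and k: "k \<le> n"
  shows "mat_adjoint (blk V 0 n 0 k) *\<^sub>v (Z *\<^sub>v c) = blk (mat_adjoint V * Z) 0 k 0 p *\<^sub>v c"
proof -
  have V': "mat_adjoint V \<in> carrier_mat n n" using V by (rule mat_adjoint_carrier)
  have "mat_adjoint (blk V 0 n 0 k) *\<^sub>v (Z *\<^sub>v c) = blk (mat_adjoint V) 0 k 0 n *\<^sub>v (Z *\<^sub>v c)"
    using V k by (simp add: mat_adjoint_blk_cols)
  also have "\<dots> = vec_first (mat_adjoint V *\<^sub>v (Z *\<^sub>v c)) k"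
    using V' Z c k by (simp add: blk_mult_vec_first)
  also have "\<dots> = blk (mat_adjoint V * Z) 0 k 0 p *\<^sub>v c"
    using blk_mult_vec_first[OF mult_carrier_mat[OF V' Z] c k] assoc_mult_mat_vec[OF V' Z c] by simp
  finally show ?thesis .
qed

lemma vnorm2_square_unitary_split:
  assumes V: "V \<in> carrier_mat n n" and unitary: "mat_adjoint V * V = 1\<^sub>m n"
    and Z: "Z \<in> carrier_mat n p" and c: "c \<in> carrier_vec p" and k: "k \<le> n"
  shows "(vnorm2 (Z *\<^sub>v c))\<^sup>2 = (vnorm2 (blk (mat_adjoint V * Z) 0 k 0 p *\<^sub>v c))\<^sup>2
    + (vnorm2 (blk (mat_adjoint V * Z) k (n - k) 0 p *\<^sub>v c))\<^sup>2"
proof -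
  define Y where "Y = mat_adjoint V * Z"
  have V': "mat_adjoint V \<in> carrier_mat n n" using V by (rule mat_adjoint_carrier)
  have Y: "Y \<in> carrier_mat n p" unfolding Y_def using V' Z by simp
  have "V *\<^sub>v (Y *\<^sub>v c) = (V * mat_adjoint V) *\<^sub>v (Z *\<^sub>v c)"
    using V V' Z c unfolding Y_def by (simp add: assoc_mult_mat_vec)
  also have "\<dots> = Z *\<^sub>v c"
    using mat_mult_left_right_inverse[OF V' V unitary] Z c by simp
  finally have "vnorm2 (Z *\<^sub>v c) = vnorm2 (Y *\<^sub>v c)"
    using vnorm2_isometry[OF V unitary] Y c by (metis mult_mat_vec_carrier)
  moreover have "Y *\<^sub>v c \<in> carrier_vec (k + (n - k))"
    using Y c k by simp
  ultimately show ?thesis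
    using Y c k unfolding Y_def[symmetric]
    by (simp add: vnorm2_square_split blk_mult_vec_first blk_mult_vec_last)
qed

lemma cos_max_angle_eq_Inf_graph_sphere:
  assumes V: "V \<in> carrier_mat n n" and unitary: "mat_adjoint V * V = 1\<^sub>m n"
    and Z: "Z \<in> carrier_mat n k" and k: "k \<le> n"
    and inv: "invertible_mat (blk (mat_adjoint V * Z) 0 k 0 k)"
  shows "cos_max_angle (blk V 0 n 0 k) Z
    = Inf (vnorm2 ` graph_sphere (blk (mat_adjoint V * Z) k (n - k) 0 k * minv (blk (mat_adjoint V * Z) 0 k 0 k)))"
proof -
  define Zk where "Zk = blk (mat_adjoint V * Z) 0 k 0 k"
  define T where "T = blk (mat_adjoint V * Z) k (n - k) 0 k * minv Zk"
  have Zk: "Zk \<in> carrier_mat k k" unfolding Zk_def by simp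
  note Zk_inv = minv_inverse[OF inv[folded Zk_def] Zk]
  have T: "T \<in> carrier_mat (n - k) k"
    unfolding T_def using mult_carrier_mat[OF blk_carrier Zk_inv(1)] .
  have "T * Zk = blk (mat_adjoint V * Z) k (n - k) 0 k"
    unfolding T_def using Zk_inv Zk by (simp add: assoc_mult_mat[of _ "n - k" k _ k _ k])
  then have sphere:
      "(vnorm2 (Z *\<^sub>v c))\<^sup>2 = (vnorm2 (Zk *\<^sub>v c))\<^sup>2 + (vnorm2 (T *\<^sub>v (Zk *\<^sub>v c)))\<^sup>2"
    if c: "c \<in> carrier_vec k" for c
    using vnorm2_square_unitary_split[OF V unitary Z c k] assoc_mult_mat_vec[OF T Zk c]
    unfolding Zk_def by simp
  note proj = mat_adjoint_first_cols_mult_vec[OF V Z _ k, folded Zk_def]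
  have "{vnorm2 (mat_adjoint (blk V 0 n 0 k) *\<^sub>v w) | w.
        (\<exists>c\<in>carrier_vec (dim_col Z). w = Z *\<^sub>v c) \<and> vnorm2 w = 1} = vnorm2 ` graph_sphere T"
    (is "?A = _")
  proof (intro equalityI subsetI)
    fix g assume "g \<in> ?A"
    then obtain c where c: "c \<in> carrier_vec k" and "vnorm2 (Z *\<^sub>v c) = 1"
      and g: "g = vnorm2 (Zk *\<^sub>v c)"
      using Z proj by auto
    then have "Zk *\<^sub>v c \<in> graph_sphere T"
      using sphere[OF c] Zk T unfolding graph_sphere_def by simp
    then show "g \<in> vnorm2 ` graph_sphere T"
      unfolding g by (rule imageI)
  next
    fix g assume "g \<in> vnorm2 ` graph_sphere T"
    then obtain y where y: "y \<in> graph_sphere T" and g: "g = vnorm2 y"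
      by blast
    define c where "c = minv Zk *\<^sub>v y"
    have yk: "y \<in> carrier_vec k" using y T unfolding graph_sphere_def by simp
    then have c: "c \<in> carrier_vec k" unfolding c_def using Zk_inv by simp
    have "Zk *\<^sub>v c = y"
      unfolding c_def using Zk Zk_inv yk by (simp add: assoc_mult_mat_vec[symmetric])
    then have "(vnorm2 (Z *\<^sub>v c))\<^sup>2 = 1\<^sup>2"
      using sphere[OF c] y T unfolding graph_sphere_def by simp
    then have "vnorm2 (Z *\<^sub>v c) = 1"
      using power2_eq_iff_nonneg[OF vnorm2_nonneg zero_le_one] by blast
    then show "g \<in> ?A"
      using Z c proj[OF c] \<open>Zk *\<^sub>v c = y\<close> unfolding g by auto
  qed
  then show ?thesis
    unfolding cos_max_angle_def T_def Zk_def by simp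
qed

lemma tan_angle_eq_spec_norm:
  assumes V: "V \<in> carrier_mat n n" and unitary: "mat_adjoint V * V = 1\<^sub>m n"
    and Z: "Z \<in> carrier_mat n k" and k: "0 < k" "k \<le> n"
    and inv: "invertible_mat (blk (mat_adjoint V * Z) 0 k 0 k)"
  shows "tan_angle (blk V 0 n 0 k) Z
    = spec_norm (blk (mat_adjoint V * Z) k (n - k) 0 k * minv (blk (mat_adjoint V * Z) 0 k 0 k))"
proof -
  let ?T = "blk (mat_adjoint V * Z) k (n - k) 0 k * minv (blk (mat_adjoint V * Z) 0 k 0 k)"
  have T: "?T \<in> carrier_mat (n - k) k"
    using mult_carrier_mat[OF blk_carrier minv_inverse(1)[OF inv blk_carrier]] .
  have "max_angle (blk V 0 n 0 k) Z = arctan (spec_norm ?T)"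
    unfolding max_angle_def cos_max_angle_eq_Inf_graph_sphere[OF V unitary Z k(2) inv]
      Inf_vnorm2_graph_sphere[OF T k(1)]
    by (simp add: arccos_inverse_sqrt spec_norm_nonneg[OF T k(1)])
  then show ?thesis
    unfolding tan_angle_def by (simp add: tan_arctan)
qed

lemma tan_angle_mult_eigenbasis:
  assumes B: "B \<in> carrier_mat n n" and V: "V \<in> carrier_mat n n" and unitary: "mat_adjoint V * V = 1\<^sub>m n"
    and eig: "\<And>i. i < n \<Longrightarrow> B *\<^sub>v col V i = d i \<cdot>\<^sub>v col V i"
    and d: "\<And>j. j < k \<Longrightarrow> d j \<noteq> 0"
    and X: "X \<in> carrier_mat n k" and k: "0 < k" "k \<le> n"
    and inv: "invertible_mat (blk (mat_adjoint V * X) 0 k 0 k)"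
  shows "tan_angle (blk V 0 n 0 k) (B * X)
    = spec_norm (mat_diag (n - k) (\<lambda>i. d (k + i))
        * (blk (mat_adjoint V * X) k (n - k) 0 k * minv (blk (mat_adjoint V * X) 0 k 0 k))
        * mat_diag k (\<lambda>j. 1 / d j))"
proof -
  define Y where "Y = mat_adjoint V * X"
  define Zk where "Zk = blk Y 0 k 0 k"
  define Zr where "Zr = blk Y k (n - k) 0 k"
  define Dr where "Dr = mat_diag (n - k) (\<lambda>i. d (k + i))"
  define Dk_inv where "Dk_inv = mat_diag k (\<lambda>j. 1 / d j)"
  have V': "mat_adjoint V \<in> carrier_mat n n" using V by (rule mat_adjoint_carrier)
  have Y: "Y \<in> carrier_mat n k" unfolding Y_def using V' X by simp
  have Zk: "Zk \<in> carrier_mat k k" and Zr: "Zr \<in> carrier_mat (n - k) k"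
    and Dr: "Dr \<in> carrier_mat (n - k) (n - k)" and Dk_inv: "Dk_inv \<in> carrier_mat k k"
    unfolding Zk_def Zr_def Dr_def Dk_inv_def by simp_all
  note Zk_inv = minv_inverse[OF inv[folded Y_def, folded Zk_def] Zk]
  have "mat_adjoint V * (B * X) = (mat_adjoint V * B) * X"
    by (rule assoc_mult_mat[symmetric, OF V' B X])
  also have "mat_adjoint V * B = mat_diag n d * mat_adjoint V"
    by (rule mat_adjoint_mult_eigenbasis[OF B V unitary eig])
  also have "mat_diag n d * mat_adjoint V * X = mat_diag n d * Y"
    unfolding Y_def by (rule assoc_mult_mat[OF mat_diag_dim V' X])
  finally have BX: "mat_adjoint V * (B * X) = mat_diag n d * Y" .
  have top: "blk (mat_adjoint V * (B * X)) 0 k 0 k = mat_diag k d * Zk"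
    unfolding BX Zk_def using blk_mat_diag_mult[OF Y, of 0 k d] k by simp
  have bottom: "blk (mat_adjoint V * (B * X)) k (n - k) 0 k = Dr * Zr"
    unfolding BX Dr_def Zr_def using blk_mat_diag_mult[OF Y, of k "n - k" d] k by simp
  have DZk_inv: "invertible_mat (mat_diag k d * Zk)" "minv (mat_diag k d * Zk) = minv Zk * Dk_inv"
    unfolding Dk_inv_def using minv_mat_diag_mult[OF inv[folded Y_def, folded Zk_def] Zk] d by blast+
  have "tan_angle (blk V 0 n 0 k) (B * X) = spec_norm (Dr * Zr * (minv Zk * Dk_inv))"
    using tan_angle_eq_spec_norm[OF V unitary mult_carrier_mat[OF B X] k]
    unfolding top bottom DZk_inv(2) using DZk_inv(1) by simp
  also have "Dr * Zr * (minv Zk * Dk_inv) = Dr * (Zr * (minv Zk * Dk_inv))"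
    by (rule assoc_mult_mat[OF Dr Zr mult_carrier_mat[OF Zk_inv(1) Dk_inv]])
  also have "Zr * (minv Zk * Dk_inv) = Zr * minv Zk * Dk_inv"
    by (rule assoc_mult_mat[OF Zr Zk_inv(1) Dk_inv, symmetric])
  also have "Dr * (Zr * minv Zk * Dk_inv) = Dr * (Zr * minv Zk) * Dk_inv"
    by (rule assoc_mult_mat[OF Dr mult_carrier_mat[OF Zr Zk_inv(1)] Dk_inv, symmetric])
  finally show ?thesis
    unfolding Dr_def Dk_inv_def Zr_def Zk_def Y_def .
qed

theorem theorem5p1:
  fixes n k l :: nat and B V X :: "complex mat" and \<sigma> :: "nat \<Rightarrow> real"
  assumes B: "B \<in> carrier_mat n n" and herm: "hermitian_mat B" and pd: "posdef_mat B"
    and V: "V \<in> carrier_mat n n" and Vunit: "mat_adjoint V * V = 1\<^sub>m n"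
    and eig: "\<And>i. i < n \<Longrightarrow> B *\<^sub>v col V i = complex_of_real (\<sigma> i) \<cdot>\<^sub>v col V i"
    and sorted: "\<And>i j. i \<le> j \<Longrightarrow> j < n \<Longrightarrow> \<sigma> j \<le> \<sigma> i"
    and pos: "\<And>i. i < n \<Longrightarrow> \<sigma> i > 0"
    and kl: "1 \<le> k" "k < l" "l < n"
    and X: "X \<in> carrier_mat n k" and Xorth: "mat_adjoint X * X = 1\<^sub>m k"
    and Xk_nonsing: "invertible_mat (blk (mat_adjoint V * X) 0 k 0 k)"
    and tan_nz: "tan_angle (blk V 0 n 0 k) X \<noteq> 0"
  shows "tan_angle (blk V 0 n 0 k) (B * X) / tan_angle (blk V 0 n 0 k) X
     \<le> \<sigma> l / \<sigma> (k - 1)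
        + (\<sigma> k - \<sigma> l) / \<sigma> (k - 1)
          * (spec_norm (blk (mat_adjoint V * X) k (l - k) 0 k * minv (blk (mat_adjoint V * X) 0 k 0 k))
             / spec_norm (blk (mat_adjoint V * X) k (n - k) 0 k * minv (blk (mat_adjoint V * X) 0 k 0 k)))"
proof -
  have k: "0 < k" "k \<le> n" using kl by auto
  define Y where "Y = mat_adjoint V * X"
  define M where "M = minv (blk Y 0 k 0 k)"
  define T where "T = blk Y k (n - k) 0 k * M"
  have M: "M \<in> carrier_mat k k"
    unfolding M_def using minv_inverse[OF Xk_nonsing[folded Y_def] blk_carrier] by simp
  have T: "T \<in> carrier_mat (n - k) k" unfolding T_def using mult_carrier_mat[OF blk_carrier M] .
  have T_top: "blk T 0 (l - k) 0 k = blk Y k (l - k) 0 k * M"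
    unfolding T_def using M kl by (simp add: blk_mult[OF blk_carrier M] blk_blk)
  have tan_X: "tan_angle (blk V 0 n 0 k) X = spec_norm T"
    unfolding T_def M_def Y_def by (rule tan_angle_eq_spec_norm[OF V Vunit X k Xk_nonsing])
  have nz: "complex_of_real (\<sigma> j) \<noteq> 0" if "j < k" for j
    using pos[of j] that k by simp
  have "tan_angle (blk V 0 n 0 k) (B * X)
      = spec_norm (mat_diag (n - k) (\<lambda>i. complex_of_real (\<sigma> (k + i))) * T
          * mat_diag k (\<lambda>j. 1 / complex_of_real (\<sigma> j)))"
    unfolding T_def M_def Y_def by (rule tan_angle_mult_eigenbasis[OF B V Vunit eig nz X k Xk_nonsing])
  also have "\<dots>
      \<le> (\<sigma> l * spec_norm T + (\<sigma> k - \<sigma> l) * spec_norm (blk T 0 (l - k) 0 k)) / \<sigma> (k - 1)"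
    using kl pos sorted
    by (intro spec_norm_diag_sandwich_le[OF T k(1)]) (auto simp: less_imp_le)
  finally have tan_BX: "tan_angle (blk V 0 n 0 k) (B * X)
      \<le> (\<sigma> l * spec_norm T + (\<sigma> k - \<sigma> l) * spec_norm (blk T 0 (l - k) 0 k)) / \<sigma> (k - 1)" .
  have "0 < spec_norm T" using tan_nz tan_X spec_norm_nonneg[OF T k(1)] by simp
  moreover have "0 < \<sigma> (k - 1)" using pos kl by simp
  ultimately show ?thesis
    using divide_right_mono[OF tan_BX, of "spec_norm T"]
    unfolding tan_X T_top[symmetric] T_def[symmetric] M_def[symmetric] Y_def[symmetric]
    by (simp add: field_simps)
qed

end
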